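(* Let $(W,S)$ be a Coxeter system with length function $\ell$ and Bruhat order $\le$. Let $x,y\in W$ and $s,t\in S$ be such that $y=sxt$ and $\ell(x)=\ell(y)$. If $x'\in W$ satisfies $x'\le x$, then either $x'\le y$, or $sx't\le y$ with $\ell(sx't)\le \ell(x')$.
   Context: Standard notions: Coxeter system, length function, Bruhat order. *)

theory Defs
  imports "HOL-Algebra.Multiplicative_Group" "HOL-Algebra.Generated_Groups"
begin

definition wprod :: "('a, 'b) monoid_scheme \<Rightarrow> 'a list \<Rightarrow> 'a" where
  "wprod G ws = foldr (\<lambda>x y. x \<otimes>\<^bsub>G\<^esub> y) ws \<one>\<^bsub>G\<^esub>"

text \<open>Coxeter matrix entry m(s,t) = order of st (0 encodes infinity).\<close>
definition cox_m :: "('a, 'b) monoid_scheme \<Rightarrow> 'a \<Rightarrow> 'a \<Rightarrow> nat" where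
  "cox_m G s t = group.ord G (s \<otimes>\<^bsub>G\<^esub> t)"

text \<open>Defining relators of the Coxeter presentation: (st)^m(s,t) for m(s,t) finite
  (for s = t this is the relator ss).\<close>
definition cox_relators :: "('a, 'b) monoid_scheme \<Rightarrow> 'a set \<Rightarrow> 'a list set" where
  "cox_relators G S = {concat (replicate (cox_m G s t) [s, t]) | s t. s \<in> S \<and> t \<in> S \<and> cox_m G s t > 0}"

text \<open>Congruence on words generated by the relators (equality in the presented group).\<close>
inductive cox_eq :: "('a, 'b) monoid_scheme \<Rightarrow> 'a set \<Rightarrow> 'a list \<Rightarrow> 'a list \<Rightarrow> bool"
  for G S where
  refl: "cox_eq G S u u"
| sym: "cox_eq G S u v \<Longrightarrow> cox_eq G S v u"
| trans: "cox_eq G S u v \<Longrightarrow> cox_eq G S v w \<Longrightarrow> cox_eq G S u w"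
| rel: "r \<in> cox_relators G S \<Longrightarrow> cox_eq G S (u @ r @ v) (u @ v)"

text \<open>(W,S) is a Coxeter system: W generated by the involutions S and presented by
  the relations (st)^m(s,t) = 1, i.e. every word over S representing 1 in W is
  a consequence of the defining relations.\<close>
definition coxeter_system :: "('a, 'b) monoid_scheme \<Rightarrow> 'a set \<Rightarrow> bool" where
  "coxeter_system G S \<longleftrightarrow> group G \<and> S \<subseteq> carrier G
     \<and> (\<forall>s\<in>S. s \<noteq> \<one>\<^bsub>G\<^esub> \<and> s \<otimes>\<^bsub>G\<^esub> s = \<one>\<^bsub>G\<^esub>)
     \<and> generate G S = carrier G
     \<and> (\<forall>ws. set ws \<subseteq> S \<and> wprod G ws = \<one>\<^bsub>G\<^esub> \<longrightarrow> cox_eq G S ws [])"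

definition cox_len :: "('a, 'b) monoid_scheme \<Rightarrow> 'a set \<Rightarrow> 'a \<Rightarrow> nat" where
  "cox_len G S w = (LEAST n. \<exists>ws. set ws \<subseteq> S \<and> length ws = n \<and> wprod G ws = w)"

definition reflections :: "('a, 'b) monoid_scheme \<Rightarrow> 'a set \<Rightarrow> 'a set" where
  "reflections G S = {w \<otimes>\<^bsub>G\<^esub> s \<otimes>\<^bsub>G\<^esub> inv\<^bsub>G\<^esub> w | w s. w \<in> carrier G \<and> s \<in> S}"

definition bruhat_le :: "('a, 'b) monoid_scheme \<Rightarrow> 'a set \<Rightarrow> 'a \<Rightarrow> 'a \<Rightarrow> bool" where
  "bruhat_le G S u w \<longleftrightarrow> u \<in> carrier G \<and> w \<in> carrier G \<and>
     (\<lambda>a b. \<exists>t\<in>reflections G S. b = a \<otimes>\<^bsub>G\<^esub> t \<and> cox_len G S a < cox_len G S b)\<^sup>*\<^sup>* u w"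

end

theory Submission
  imports Defs
begin

text \<open>Every defining relator contains each reflection an even number of times in its reflection
  sequence, so by the presentation the parity of the number of occurrences of a reflection in the
  reflection sequence of a word depends only on the element represented. This gives
  \<open>\<ell>(ws) = \<ell>(w) \<plusminus> 1\<close>, the strong exchange condition and hence the lifting property of the
  Bruhat order. For the lemma we may assume \<open>sxt \<noteq> x\<close>; then \<open>\<ell>(sxt) = \<ell>(x)\<close> makes \<open>s\<close>
  a left ascent of \<open>x\<close> exactly when \<open>t\<close> is a right descent, and after passing to inverses \<open>s\<close>
  is a left ascent. Lifting \<open>x' \<le> x < sx\<close> first along \<open>t\<close> and then along \<open>s\<close> yields the
  two alternatives.\<close>

definition conjugate :: "('a, 'b) monoid_scheme \<Rightarrow> 'a \<Rightarrow> 'a \<Rightarrow> 'a" where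
  "conjugate G g r = g \<otimes>\<^bsub>G\<^esub> r \<otimes>\<^bsub>G\<^esub> inv\<^bsub>G\<^esub> g"

text \<open>For a word \<open>s\<^sub>1 \<dots> s\<^sub>k\<close> the \<open>i\<close>-th entry is \<open>s\<^sub>1 \<cdots> s\<^sub>i\<^sub>-\<^sub>1 s\<^sub>i s\<^sub>i\<^sub>-\<^sub>1 \<cdots> s\<^sub>1\<close>;
  multiplying the product of the word on the left by it deletes the \<open>i\<close>-th letter.\<close>
fun word_reflections :: "('a, 'b) monoid_scheme \<Rightarrow> 'a list \<Rightarrow> 'a list" where
  "word_reflections G [] = []"
| "word_reflections G (a # ws) = a # map (conjugate G a) (word_reflections G ws)"

locale coxeter = group G for G :: "('a, 'b) monoid_scheme" (structure) +
  fixes S :: "'a set"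
  assumes coxeter_system: "coxeter_system G S"
begin

abbreviation len :: "'a \<Rightarrow> nat" where
  "len \<equiv> cox_len G S"

lemma generators_closed: "S \<subseteq> carrier G"
  using coxeter_system by (simp add: coxeter_system_def)

lemma generator_closed [simp]: "s \<in> S \<Longrightarrow> s \<in> carrier G"
  using generators_closed by blast

lemma generator_square [simp]: "s \<in> S \<Longrightarrow> s \<otimes> s = \<one>"
  using coxeter_system by (simp add: coxeter_system_def)

lemma generator_inv [simp]: "s \<in> S \<Longrightarrow> inv s = s"
  by (simp add: inv_equality)

lemma generator_cancel_left [simp]: "s \<in> S \<Longrightarrow> z \<in> carrier G \<Longrightarrow> s \<otimes> (s \<otimes> z) = z"
  by (simp add: m_assoc[symmetric])

lemma generator_cancel_right [simp]: "s \<in> S \<Longrightarrow> z \<in> carrier G \<Longrightarrow> z \<otimes> s \<otimes> s = z"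
  by (simp add: m_assoc)

lemma generate_generators: "generate G S = carrier G"
  using coxeter_system by (simp add: coxeter_system_def)

lemma relation_derivable: "set ws \<subseteq> S \<Longrightarrow> wprod G ws = \<one> \<Longrightarrow> cox_eq G S ws []"
  using coxeter_system by (simp add: coxeter_system_def)

lemma inv_cancel_left [simp]: "g \<in> carrier G \<Longrightarrow> z \<in> carrier G \<Longrightarrow> inv g \<otimes> (g \<otimes> z) = z"
  by (simp add: m_assoc[symmetric])

lemma inv_cancel_left' [simp]: "g \<in> carrier G \<Longrightarrow> z \<in> carrier G \<Longrightarrow> g \<otimes> (inv g \<otimes> z) = z"
  by (simp add: m_assoc[symmetric])

lemma wprod_Nil [simp]: "wprod G [] = \<one>"
  by (simp add: wprod_def)

lemma wprod_Cons [simp]: "wprod G (a # ws) = a \<otimes> wprod G ws"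
  by (simp add: wprod_def)

lemma wprod_closed [simp]: "set ws \<subseteq> carrier G \<Longrightarrow> wprod G ws \<in> carrier G"
  by (induction ws) auto

lemma words_closed: "set ws \<subseteq> S \<Longrightarrow> set ws \<subseteq> carrier G"
  using generators_closed by blast

lemma wprod_append:
  "set u \<subseteq> carrier G \<Longrightarrow> set v \<subseteq> carrier G \<Longrightarrow> wprod G (u @ v) = wprod G u \<otimes> wprod G v"
  by (induction u) (auto simp: m_assoc)

lemma wprod_rev: "set ws \<subseteq> S \<Longrightarrow> wprod G (rev ws) = inv (wprod G ws)"
  by (induction ws) (auto simp: wprod_append words_closed inv_mult_group)

lemma set_delete_subset: "set ws \<subseteq> S \<Longrightarrow> set (take i ws @ drop (Suc i) ws) \<subseteq> S"
  using set_take_subset[of i ws] set_drop_subset[of "Suc i" ws] by auto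

lemma word_exists: "w \<in> carrier G \<Longrightarrow> \<exists>ws. set ws \<subseteq> S \<and> wprod G ws = w"
  unfolding generate_generators[symmetric]
proof (induction rule: generate.induct)
  case one
  show ?case by (auto intro: exI[of _ "[]"])
next
  case (incl h)
  then show ?case by (auto intro: exI[of _ "[h]"])
next
  case (inv h)
  then show ?case by (auto intro: exI[of _ "[h]"])
next
  case (eng h1 h2)
  then obtain u v where "set u \<subseteq> S" "wprod G u = h1" "set v \<subseteq> S" "wprod G v = h2"
    by blast
  then show ?case by (intro exI[of _ "u @ v"]) (simp add: wprod_append words_closed)
qed

lemma len_le_length: "set ws \<subseteq> S \<Longrightarrow> len (wprod G ws) \<le> length ws"
  unfolding cox_len_def by (rule Least_le) blast

lemma reduced_word_exists:
  assumes "w \<in> carrier G"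
  obtains ws where "set ws \<subseteq> S" "length ws = len w" "wprod G ws = w"
proof -
  have "\<exists>n ws. set ws \<subseteq> S \<and> length ws = n \<and> wprod G ws = w"
    using word_exists[OF assms] by blast
  from LeastI_ex[OF this] show ?thesis
    using that unfolding cox_len_def by blast
qed

lemma conjugate_closed [simp]:
  "g \<in> carrier G \<Longrightarrow> x \<in> carrier G \<Longrightarrow> conjugate G g x \<in> carrier G"
  by (simp add: conjugate_def)

lemma conjugate_conjugate:
  "g \<in> carrier G \<Longrightarrow> h \<in> carrier G \<Longrightarrow> x \<in> carrier G \<Longrightarrow>
    conjugate G g (conjugate G h x) = conjugate G (g \<otimes> h) x"
  by (simp add: conjugate_def m_assoc inv_mult_group)

lemma conjugate_one [simp]: "x \<in> carrier G \<Longrightarrow> conjugate G \<one> x = x"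
  by (simp add: conjugate_def)

lemma conjugate_eq_iff:
  "g \<in> carrier G \<Longrightarrow> x \<in> carrier G \<Longrightarrow> y \<in> carrier G \<Longrightarrow>
    conjugate G g x = conjugate G g y \<longleftrightarrow> x = y"
  by (simp add: conjugate_def)

lemma conjugate_involution_self:
  "r \<in> carrier G \<Longrightarrow> r \<otimes> r = \<one> \<Longrightarrow> conjugate G r r = r"
  by (simp add: conjugate_def inv_equality)

lemma map_conjugate_one [simp]: "set xs \<subseteq> carrier G \<Longrightarrow> map (conjugate G \<one>) xs = xs"
  by (induction xs) auto

lemma count_list_map_conjugate:
  "set xs \<subseteq> carrier G \<Longrightarrow> g \<in> carrier G \<Longrightarrow> x \<in> carrier G \<Longrightarrow>
    count_list (map (conjugate G g) xs) (conjugate G g x) = count_list xs x"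
  by (induction xs) (auto simp: conjugate_eq_iff)

lemma length_word_reflections [simp]: "length (word_reflections G ws) = length ws"
  by (induction ws) auto

lemma word_reflections_closed:
  "set ws \<subseteq> carrier G \<Longrightarrow> set (word_reflections G ws) \<subseteq> carrier G"
  by (induction ws) auto

lemma word_reflections_append:
  "set u \<subseteq> carrier G \<Longrightarrow> set v \<subseteq> carrier G \<Longrightarrow>
    word_reflections G (u @ v) = word_reflections G u @ map (conjugate G (wprod G u)) (word_reflections G v)"
proof (induction u)
  case Nil
  then show ?case using word_reflections_closed[of v] by simp
next
  case (Cons a u)
  then show ?case
    using word_reflections_closed[of v] by (auto simp: conjugate_conjugate subset_iff)
qed

lemma word_reflections_rev:
  "set ws \<subseteq> S \<Longrightarrow>
    word_reflections G (rev ws) = rev (map (conjugate G (inv (wprod G ws))) (word_reflections G ws))"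
proof (induction ws)
  case (Cons a ws)
  have c: "set ws \<subseteq> carrier G" "a \<in> carrier G"
    using Cons.prems generators_closed by auto
  have "conjugate G (inv (wprod G ws)) r = conjugate G (inv (a \<otimes> wprod G ws)) (conjugate G a r)"
    if "r \<in> carrier G" for r
    using c that by (simp add: conjugate_conjugate inv_mult_group m_assoc)
  moreover have "conjugate G (inv (wprod G ws)) a = conjugate G (inv (a \<otimes> wprod G ws)) a"
    using c by (simp add: conjugate_def inv_mult_group m_assoc)
  ultimately show ?case
    using Cons c word_reflections_closed[OF c(1)]
    by (auto simp: word_reflections_append wprod_rev intro!: map_cong)
qed simp

subsection \<open>Parity of reflection counts\<close>

abbreviation reflection_count :: "'a list \<Rightarrow> 'a \<Rightarrow> nat" where
  "reflection_count ws r \<equiv> count_list (word_reflections G ws) r"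

lemma wprod_braid:
  "s \<in> S \<Longrightarrow> t \<in> S \<Longrightarrow> wprod G (concat (replicate m [s, t])) = (s \<otimes> t) [^] m"
proof (induction m)
  case (Suc m)
  then have "(s \<otimes> t) [^] Suc m = s \<otimes> t \<otimes> (s \<otimes> t) [^] m"
    by (intro nat_pow_Suc2) auto
  with Suc show ?case by (simp add: wprod_append words_closed m_assoc)
qed simp

lemma word_reflections_braid:
  "s \<in> S \<Longrightarrow> t \<in> S \<Longrightarrow>
    word_reflections G (concat (replicate m [s, t])) = map (\<lambda>i. (s \<otimes> t) [^] i \<otimes> s) [0..<2 * m]"
proof (induction m)
  case (Suc m)
  have shift: "conjugate G s (conjugate G t ((s \<otimes> t) [^] i \<otimes> s)) = (s \<otimes> t) [^] (i + 2) \<otimes> s" for i :: nat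
  proof -
    have "(s \<otimes> t) [^] (i + 2) = s \<otimes> t \<otimes> (s \<otimes> t) [^] i \<otimes> (s \<otimes> t)"
      using Suc.prems nat_pow_Suc2[of "s \<otimes> t" i] by (simp add: m_assoc)
    with Suc.prems show ?thesis by (simp add: conjugate_def m_assoc)
  qed
  have range: "[0..<2 * Suc m] = 0 # 1 # map (\<lambda>i. i + 2) [0..<2 * m]"
  proof -
    have "[0..<2 * Suc m] = 0 # 1 # [2..<2 * m + 2]"
      by (simp add: upt_conv_Cons numeral_2_eq_2)
    then show ?thesis by (simp only: map_add_upt)
  qed
  have "word_reflections G (concat (replicate (Suc m) [s, t])) =
      s # conjugate G s t # map (\<lambda>i. conjugate G s (conjugate G t ((s \<otimes> t) [^] i \<otimes> s))) [0..<2 * m]"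
    using Suc by simp
  also have "\<dots> = map (\<lambda>i. (s \<otimes> t) [^] i \<otimes> s) [0..<2 * Suc m]"
    unfolding range using Suc.prems by (simp only: list.map shift) (simp add: conjugate_def)
  finally show ?case .
qed simp

lemma word_reflections_relator:
  assumes s: "s \<in> S" and t: "t \<in> S" and m: "(s \<otimes> t) [^] m = \<one>"
  obtains L where "word_reflections G (concat (replicate m [s, t])) = L @ L" "set L \<subseteq> carrier G"
proof -
  let ?f = "\<lambda>i. (s \<otimes> t) [^] i \<otimes> s"
  have periodic: "?f (i + m) = ?f i" for i :: nat
    using s t m by (simp add: nat_pow_mult[symmetric])
  have "[0..<2 * m] = [0..<m] @ map (\<lambda>i. i + m) [0..<m]"
    by (simp add: map_add_upt mult_2 upt_add_eq_append[of 0 m m, simplified])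
  then have "map ?f [0..<2 * m] = map ?f [0..<m] @ map ?f [0..<m]"
    using periodic by simp
  moreover have "set (map ?f [0..<m]) \<subseteq> carrier G"
    using s t by auto
  ultimately show ?thesis
    using that word_reflections_braid[OF s t] by metis
qed

lemma cox_eq_invariants:
  "cox_eq G S u v \<Longrightarrow> (set u \<subseteq> S \<longleftrightarrow> set v \<subseteq> S) \<and> even (length u + length v) \<and>
     (set u \<subseteq> S \<longrightarrow> wprod G u = wprod G v \<and> (\<forall>r. even (reflection_count u r + reflection_count v r)))"
proof (induction rule: cox_eq.induct)
  case (sym u v)
  then show ?case by (simp add: add.commute)
next
  case (trans u v w)
  have "even (length u + length w)" "even (reflection_count u r + reflection_count w r)"
    if "set u \<subseteq> S" for r
    using trans.IH that by (metis even_add)+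
  with trans.IH show ?case by (metis even_add)
next
  case (rel r u v)
  then obtain s t where st: "s \<in> S" "t \<in> S" "r = concat (replicate (cox_m G s t) [s, t])"
    unfolding cox_relators_def by blast
  define m where "m = cox_m G s t"
  have pow: "(s \<otimes> t) [^] m = \<one>"
    using st pow_ord_eq_1[of "s \<otimes> t"] by (simp add: m_def cox_m_def)
  have r: "set r \<subseteq> S" "length r = 2 * m" "wprod G r = \<one>"
    using st pow wprod_braid by (auto simp: m_def length_concat sum_list_replicate)
  obtain L where L: "word_reflections G r = L @ L" "set L \<subseteq> carrier G"
    using word_reflections_relator[OF st(1,2) pow] st(3) m_def by metis
  have "wprod G (u @ r @ v) = wprod G (u @ v) \<and>
      even (reflection_count (u @ r @ v) x + reflection_count (u @ v) x)"
    if "set u \<subseteq> S" "set v \<subseteq> S" for x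
  proof -
    have c: "set u \<subseteq> carrier G" "set v \<subseteq> carrier G" "set r \<subseteq> carrier G"
      using that r(1) words_closed by auto
    have "word_reflections G (r @ v) = L @ L @ word_reflections G v"
      using c L r(3) by (simp add: word_reflections_append word_reflections_closed)
    then have "even (reflection_count (u @ r @ v) x + reflection_count (u @ v) x)"
      using c by (simp add: word_reflections_append) argo
    with c r(3) show ?thesis
      by (simp add: wprod_append)
  qed
  with r show ?case by auto
qed simp

lemma equal_products_parity:
  assumes a: "set a \<subseteq> S" and b: "set b \<subseteq> S" and eq: "wprod G a = wprod G b"
  shows "even (reflection_count a r + reflection_count b r)" and "even (length a + length b)"
proof -
  let ?g = "wprod G b"
  have c: "set a \<subseteq> carrier G" "set b \<subseteq> carrier G" "?g \<in> carrier G"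
    using a b words_closed by auto
  have "wprod G (a @ rev b) = \<one>"
    using b c eq by (simp add: wprod_append wprod_rev)
  then have "cox_eq G S (a @ rev b) []"
    using a b by (intro relation_derivable) auto
  from cox_eq_invariants[OF this]
  have inv: "even (length (a @ rev b)) \<and> even (reflection_count (a @ rev b) r)"
    using a b by simp
  have "map (conjugate G ?g) (rev (map (conjugate G (inv ?g)) (word_reflections G b))) =
      rev (word_reflections G b)"
    using c word_reflections_closed[OF c(2)]
    by (auto simp: rev_map conjugate_conjugate subset_iff intro: map_idI)
  then have "word_reflections G (a @ rev b) = word_reflections G a @ rev (word_reflections G b)"
    using b c eq by (simp add: word_reflections_append word_reflections_rev)
  with inv show "even (reflection_count a r + reflection_count b r)"
    by simp
  show "even (length a + length b)"
    using inv by simp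
qed

lemma len_parity: "set ws \<subseteq> S \<Longrightarrow> even (len (wprod G ws) + length ws)"
  using reduced_word_exists[of "wprod G ws"] equal_products_parity(2) words_closed
  by (metis wprod_closed)

lemma len_mult_generator:
  assumes w: "w \<in> carrier G" and s: "s \<in> S"
  shows "len (w \<otimes> s) = Suc (len w) \<or> len w = Suc (len (w \<otimes> s))"
proof -
  obtain ws where ws: "set ws \<subseteq> S" "length ws = len w" "wprod G ws = w"
    using reduced_word_exists[OF w] .
  obtain vs where vs: "set vs \<subseteq> S" "length vs = len (w \<otimes> s)" "wprod G vs = w \<otimes> s"
    using reduced_word_exists[of "w \<otimes> s"] w s by auto
  have ws_s: "wprod G (ws @ [s]) = w \<otimes> s" and vs_s: "wprod G (vs @ [s]) = w"
    using ws vs w s by (simp_all add: wprod_append words_closed)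
  have "len (w \<otimes> s) \<le> Suc (len w)" "len w \<le> Suc (len (w \<otimes> s))"
    using len_le_length[of "ws @ [s]"] len_le_length[of "vs @ [s]"] ws vs ws_s vs_s s by auto
  moreover have "even (len (w \<otimes> s) + Suc (len w))"
    using len_parity[of "ws @ [s]"] ws ws_s s by simp
  ultimately show ?thesis by presburger
qed

lemma len_inv [simp]:
  assumes "w \<in> carrier G"
  shows "len (inv w) = len w"
proof -
  have le: "len (inv v) \<le> len v" if v: "v \<in> carrier G" for v
  proof -
    obtain ws where "set ws \<subseteq> S" "length ws = len v" "wprod G ws = v"
      using reduced_word_exists[OF v] .
    then show ?thesis
      using len_le_length[of "rev ws"] wprod_rev by auto
  qed
  show ?thesis
    using le[of w] le[of "inv w"] assms by simp
qed

lemma len_generator_mult: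
  assumes "w \<in> carrier G" "s \<in> S"
  shows "len (s \<otimes> w) = Suc (len w) \<or> len w = Suc (len (s \<otimes> w))"
proof -
  have "len (inv w \<otimes> s) = len (s \<otimes> w)"
    using len_inv[of "s \<otimes> w"] assms by (simp add: inv_mult_group)
  then show ?thesis
    using len_mult_generator[of "inv w" s] assms by simp
qed

lemma reflection_closed: "r \<in> reflections G S \<Longrightarrow> r \<in> carrier G"
  unfolding reflections_def by auto

lemma reflection_square [simp]: "r \<in> reflections G S \<Longrightarrow> r \<otimes> r = \<one>"
  unfolding reflections_def by (auto simp: m_assoc)

lemma reflection_inv [simp]: "r \<in> reflections G S \<Longrightarrow> inv r = r"
  using reflection_closed by (simp add: inv_equality)

lemma reflection_conjugate:
  assumes "r \<in> reflections G S" "g \<in> carrier G"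
  shows "conjugate G g r \<in> reflections G S"
proof -
  obtain w s where "r = w \<otimes> s \<otimes> inv w" "w \<in> carrier G" "s \<in> S"
    using assms(1) unfolding reflections_def by blast
  moreover have "conjugate G g (w \<otimes> s \<otimes> inv w) = g \<otimes> w \<otimes> s \<otimes> inv (g \<otimes> w)"
    using assms(2) calculation by (simp add: conjugate_def m_assoc inv_mult_group)
  ultimately show ?thesis
    using assms(2) unfolding reflections_def by blast
qed

lemma generator_reflection: "s \<in> S \<Longrightarrow> s \<in> reflections G S"
  unfolding reflections_def by (intro CollectI exI[of _ \<one>] exI[of _ s]) simp

lemma word_reflections_reflections:
  "set ws \<subseteq> S \<Longrightarrow> set (word_reflections G ws) \<subseteq> reflections G S"
  by (induction ws) (auto simp: generator_reflection reflection_conjugate)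

lemma reflection_word_odd:
  assumes r: "r \<in> reflections G S"
  obtains q where "set q \<subseteq> S" "wprod G q = r" "odd (reflection_count q r)"
proof -
  obtain a s where r_eq: "r = conjugate G a s" and a: "a \<in> carrier G" and s: "s \<in> S"
    using r unfolding reflections_def conjugate_def by blast
  obtain ws where ws: "set ws \<subseteq> S" "wprod G ws = a"
    using word_exists[OF a] by blast
  let ?q = "ws @ s # rev ws" and ?L = "word_reflections G ws"
  have c: "set ws \<subseteq> carrier G" "set ?L \<subseteq> carrier G" "r \<in> carrier G"
    using ws words_closed word_reflections_closed r reflection_closed by auto
  have "conjugate G a (conjugate G s (conjugate G (inv a) x)) = conjugate G r x"
    if "x \<in> carrier G" for x
    using that a s r_eq by (simp add: conjugate_def m_assoc inv_mult_group)
  then have "word_reflections G ?q = ?L @ r # rev (map (conjugate G r) ?L)"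
    using ws c a s r_eq
    by (simp add: word_reflections_append word_reflections_rev rev_map subset_iff)
  then have "reflection_count ?q r = 2 * reflection_count ws r + 1"
    using count_list_map_conjugate[OF c(2) c(3) c(3)] conjugate_involution_self[OF c(3)] r
    by simp
  then have "odd (reflection_count ?q r)"
    by simp
  moreover have "set ?q \<subseteq> S" "wprod G ?q = r"
    using ws c a s r_eq by (simp_all add: wprod_append wprod_rev conjugate_def m_assoc)
  ultimately show ?thesis
    using that by blast
qed

lemma reflection_mult_parity:
  assumes vs: "set vs \<subseteq> S" and ws: "set ws \<subseteq> S" and r: "r \<in> reflections G S"
    and eq: "wprod G vs = r \<otimes> wprod G ws"
  shows "odd (reflection_count vs r + reflection_count ws r)"
proof -
  obtain q where q: "set q \<subseteq> S" "wprod G q = r" "odd (reflection_count q r)"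
    using reflection_word_odd[OF r] .
  have c: "set q \<subseteq> carrier G" "set ws \<subseteq> carrier G" "r \<in> carrier G"
    using q ws words_closed r reflection_closed by auto
  have "reflection_count (q @ ws) r = reflection_count q r + reflection_count ws r"
    using count_list_map_conjugate[OF word_reflections_closed[OF c(2)] c(3) c(3)]
      conjugate_involution_self[OF c(3)] c q r
    by (simp add: word_reflections_append)
  moreover have "even (reflection_count (q @ ws) r + reflection_count vs r)"
    using equal_products_parity(1)[of "q @ ws" vs] q ws vs c eq by (simp add: wprod_append)
  ultimately show ?thesis
    using q(3) by presburger
qed

subsection \<open>The strong exchange condition\<close>

lemma word_reflections_nth_mult:
  "set ws \<subseteq> S \<Longrightarrow> i < length ws \<Longrightarrow>
    word_reflections G ws ! i \<otimes> wprod G ws = wprod G (take i ws @ drop (Suc i) ws)"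
proof (induction ws arbitrary: i)
  case (Cons a ws)
  have c: "a \<in> S" "set ws \<subseteq> S" "set ws \<subseteq> carrier G"
    using Cons.prems words_closed by auto
  show ?case
  proof (cases i)
    case (Suc j)
    then have j: "j < length ws"
      using Cons.prems by simp
    then have "word_reflections G ws ! j \<in> carrier G"
      using word_reflections_closed[OF c(3)] by (simp add: subset_iff)
    with Suc c j have "word_reflections G (a # ws) ! i \<otimes> wprod G (a # ws) =
        a \<otimes> (word_reflections G ws ! j \<otimes> wprod G ws)"
      by (simp add: conjugate_def m_assoc)
    with Cons.IH[OF c(2) j] Suc show ?thesis
      by simp
  qed (use c in simp)
qed simp

lemma delete_letter_mult_reflection:
  assumes ws: "set ws \<subseteq> S" and i: "i < length ws"
  obtains r where "r \<in> reflections G S" "wprod G (take i ws @ drop (Suc i) ws) = wprod G ws \<otimes> r"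
proof -
  let ?w = "wprod G ws" and ?t = "word_reflections G ws ! i"
  have t: "?t \<in> reflections G S"
    using word_reflections_reflections[OF ws] i by (simp add: subset_iff)
  show ?thesis
  proof (rule that)
    show "conjugate G (inv ?w) ?t \<in> reflections G S"
      using reflection_conjugate[OF t] ws words_closed by simp
    show "wprod G (take i ws @ drop (Suc i) ws) = ?w \<otimes> conjugate G (inv ?w) ?t"
      using word_reflections_nth_mult[OF ws i] t ws words_closed reflection_closed
        words_closed[OF set_delete_subset[OF ws, of i]]
      by (simp add: conjugate_def m_assoc)
  qed
qed

lemma exchange_left:
  assumes ws: "set ws \<subseteq> S" "length ws = len (wprod G ws)"
    and r: "r \<in> reflections G S" and desc: "len (r \<otimes> wprod G ws) < len (wprod G ws)"
  obtains i where "i < length ws" "r \<otimes> wprod G ws = wprod G (take i ws @ drop (Suc i) ws)"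
proof -
  let ?w = "wprod G ws"
  have c: "?w \<in> carrier G" "r \<in> carrier G"
    using ws words_closed r reflection_closed by auto
  have "r \<in> set (word_reflections G ws)"
  proof (rule ccontr)
    assume not_in: "r \<notin> set (word_reflections G ws)"
    obtain vs where vs: "set vs \<subseteq> S" "length vs = len (r \<otimes> ?w)" "wprod G vs = r \<otimes> ?w"
      using reduced_word_exists[of "r \<otimes> ?w"] c by auto
    have w_eq: "?w = r \<otimes> wprod G vs"
      using vs c r by (simp add: m_assoc[symmetric])
    then have "odd (reflection_count ws r + reflection_count vs r)"
      using reflection_mult_parity[OF ws(1) vs(1) r] by simp
    then have "reflection_count vs r \<noteq> 0"
      using not_in by (simp add: odd_pos)
    then have "r \<in> set (word_reflections G vs)"
      by (simp add: count_list_0_iff)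
    then obtain j where j: "j < length vs" "word_reflections G vs ! j = r"
      by (auto simp: in_set_conv_nth)
    then have "?w = wprod G (take j vs @ drop (Suc j) vs)"
      using word_reflections_nth_mult[OF vs(1) j(1)] w_eq by simp
    then have "len ?w \<le> length vs - 1"
      using len_le_length[OF set_delete_subset[OF vs(1)], of j] j by simp
    with desc vs(2) show False
      by linarith
  qed
  then obtain i where i: "i < length ws" "word_reflections G ws ! i = r"
    by (auto simp: in_set_conv_nth)
  show ?thesis
    using word_reflections_nth_mult[OF ws(1) i(1)] i by (intro that[OF i(1)]) simp
qed

lemma exchange_right:
  assumes ws: "set ws \<subseteq> S" "length ws = len (wprod G ws)"
    and r: "r \<in> reflections G S" and desc: "len (wprod G ws \<otimes> r) < len (wprod G ws)"
  obtains i where "i < length ws" "wprod G ws \<otimes> r = wprod G (take i ws @ drop (Suc i) ws)"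
proof -
  let ?w = "wprod G ws"
  have w: "?w \<in> carrier G"
    using ws(1) words_closed by simp
  have eq: "conjugate G ?w r \<otimes> ?w = ?w \<otimes> r"
    using w r reflection_closed by (simp add: conjugate_def m_assoc)
  obtain i where i: "i < length ws" "conjugate G ?w r \<otimes> ?w = wprod G (take i ws @ drop (Suc i) ws)"
    using exchange_left[OF ws reflection_conjugate[OF r w]] desc eq by metis
  show ?thesis
    using i eq by (intro that[OF i(1)]) simp
qed

subsection \<open>Bruhat order and the lifting property\<close>

abbreviation bruhat (infix "\<preceq>" 50) where
  "u \<preceq> w \<equiv> bruhat_le G S u w"

definition bruhat_step :: "'a \<Rightarrow> 'a \<Rightarrow> bool" where
  "bruhat_step a b \<longleftrightarrow> (\<exists>r\<in>reflections G S. b = a \<otimes> r \<and> len a < len b)"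

lemma bruhat_step_closed: "bruhat_step a b \<Longrightarrow> a \<in> carrier G \<Longrightarrow> b \<in> carrier G"
  unfolding bruhat_step_def using reflection_closed by auto

lemma bruhat_le_iff: "u \<preceq> w \<longleftrightarrow> u \<in> carrier G \<and> bruhat_step\<^sup>*\<^sup>* u w"
proof -
  have "bruhat_step\<^sup>*\<^sup>* u w \<Longrightarrow> u \<in> carrier G \<Longrightarrow> w \<in> carrier G"
    by (induction rule: rtranclp_induct) (auto simp: bruhat_step_closed)
  moreover have "(\<lambda>a b. \<exists>t\<in>reflections G S. b = a \<otimes> t \<and> len a < len b) = bruhat_step"
    by (simp add: bruhat_step_def fun_eq_iff)
  ultimately show ?thesis
    unfolding bruhat_le_def by auto
qed

lemma bruhat_le_closed: "u \<preceq> w \<Longrightarrow> u \<in> carrier G \<and> w \<in> carrier G"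
  by (simp add: bruhat_le_def)

lemma bruhat_le_refl: "u \<in> carrier G \<Longrightarrow> u \<preceq> u"
  by (simp add: bruhat_le_iff)

lemma bruhat_le_trans [trans]: "u \<preceq> v \<Longrightarrow> v \<preceq> w \<Longrightarrow> u \<preceq> w"
  by (auto simp: bruhat_le_iff)

lemma bruhat_step_le: "bruhat_step u v \<Longrightarrow> u \<in> carrier G \<Longrightarrow> u \<preceq> v"
  by (simp add: bruhat_le_iff)

lemma bruhat_le_mult_reflection:
  "u \<in> carrier G \<Longrightarrow> r \<in> reflections G S \<Longrightarrow> len u < len (u \<otimes> r) \<Longrightarrow> u \<preceq> u \<otimes> r"
  using bruhat_step_le bruhat_step_def by blast

lemma bruhat_le_reflection_mult:
  assumes "u \<in> carrier G" "r \<in> reflections G S" "len u < len (r \<otimes> u)"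
  shows "u \<preceq> r \<otimes> u"
proof -
  have "r \<otimes> u = u \<otimes> conjugate G (inv u) r"
    using assms reflection_closed by (simp add: conjugate_def m_assoc)
  then show ?thesis
    using assms bruhat_le_mult_reflection reflection_conjugate by simp
qed

lemma bruhat_le_mult_generator_descent:
  "u \<in> carrier G \<Longrightarrow> t \<in> S \<Longrightarrow> len (u \<otimes> t) < len u \<Longrightarrow> u \<otimes> t \<preceq> u"
  using bruhat_le_mult_reflection[of "u \<otimes> t" t] generator_reflection by simp

lemma bruhat_le_generator_mult_descent:
  "u \<in> carrier G \<Longrightarrow> s \<in> S \<Longrightarrow> len (s \<otimes> u) < len u \<Longrightarrow> s \<otimes> u \<preceq> u"
  using bruhat_le_reflection_mult[of "s \<otimes> u" s] generator_reflection by simp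

lemma bruhat_step_mult_generator:
  assumes step: "bruhat_step y z" and y: "y \<in> carrier G" and t: "t \<in> S"
    and same: "len y < len (y \<otimes> t) \<longleftrightarrow> len z < len (z \<otimes> t)"
  shows "bruhat_step (y \<otimes> t) (z \<otimes> t)"
proof -
  obtain r where r: "r \<in> reflections G S" "z = y \<otimes> r" "len y < len z"
    using step unfolding bruhat_step_def by blast
  have "z \<otimes> t = y \<otimes> t \<otimes> conjugate G t r"
    using r y t reflection_closed by (simp add: conjugate_def m_assoc)
  moreover have "len (y \<otimes> t) < len (z \<otimes> t)"
    using len_mult_generator[OF y t] len_mult_generator[of z t] same r y t reflection_closed
    by auto
  ultimately show ?thesis
    unfolding bruhat_step_def using reflection_conjugate[OF r(1)] t by auto
qed

lemma bruhat_step_descent: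
  assumes step: "bruhat_step y z" and y: "y \<in> carrier G" and t: "t \<in> S"
    and y_asc: "len y < len (y \<otimes> t)" and z_desc: "len (z \<otimes> t) < len z"
  shows "z = y \<otimes> t \<or> bruhat_step (y \<otimes> t) (z \<otimes> t)"
proof -
  obtain r where r: "r \<in> reflections G S" "z = y \<otimes> r" "len y < len z"
    using step unfolding bruhat_step_def by blast
  have z: "z \<in> carrier G"
    using bruhat_step_closed[OF step y] .
  obtain vs where vs: "set vs \<subseteq> S" "length vs = len (z \<otimes> t)" "wprod G vs = z \<otimes> t"
    using reduced_word_exists[of "z \<otimes> t"] z t by auto
  have ws: "set (vs @ [t]) \<subseteq> S" "wprod G (vs @ [t]) = z"
    using vs t z by (simp_all add: wprod_append words_closed m_assoc)
  have "length (vs @ [t]) = len z"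
    using vs len_mult_generator[OF z t] z_desc by auto
  moreover have "z \<otimes> r = y"
    using r y reflection_closed by (simp add: m_assoc)
  ultimately obtain i where i: "i < length (vs @ [t])"
      "y = wprod G (take i (vs @ [t]) @ drop (Suc i) (vs @ [t]))"
    using exchange_right[of "vs @ [t]" r] ws r by auto
  show ?thesis
  proof (cases "i = length vs")
    case True
    then show ?thesis
      using i vs z t by simp
  next
    case False
    let ?d = "take i vs @ drop (Suc i) vs"
    have i_vs: "i < length vs"
      using False i by simp
    have d: "set ?d \<subseteq> S" "set ?d \<subseteq> carrier G"
      using set_delete_subset[OF vs(1)] words_closed by auto
    have "y = wprod G ?d \<otimes> t"
      using i i_vs d t by (simp add: wprod_append m_assoc)
    then have yt: "y \<otimes> t = wprod G ?d"
      using d t by simp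
    obtain r' where r': "r' \<in> reflections G S" "wprod G ?d = wprod G vs \<otimes> r'"
      using delete_letter_mult_reflection[OF vs(1) i_vs] .
    have "len (y \<otimes> t) < len (z \<otimes> t)"
      using yt len_le_length[OF d(1)] i_vs vs(2) by simp
    moreover have "z \<otimes> t = y \<otimes> t \<otimes> r'"
      using yt r' vs z t reflection_closed[OF r'(1)] by (simp add: m_assoc)
    ultimately have "bruhat_step (y \<otimes> t) (z \<otimes> t)"
      unfolding bruhat_step_def using r'(1) by blast
    then show ?thesis ..
  qed
qed


lemma bruhat_lifting_step:
  assumes step: "bruhat_step y z" and y: "y \<in> carrier G" and t: "t \<in> S" and zw: "z \<preceq> w"
    and IH: "z \<otimes> t \<preceq> w" "len (z \<otimes> t) < len z \<Longrightarrow> z \<otimes> t \<preceq> w \<otimes> t"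
      "len z < len (z \<otimes> t) \<Longrightarrow> z \<preceq> w \<otimes> t"
  shows "y \<otimes> t \<preceq> w"
    and "len (y \<otimes> t) < len y \<Longrightarrow> y \<otimes> t \<preceq> w \<otimes> t"
    and "len y < len (y \<otimes> t) \<Longrightarrow> y \<preceq> w \<otimes> t"
proof -
  have z: "z \<in> carrier G"
    using bruhat_step_closed[OF step y] .
  have yz: "y \<preceq> z"
    using bruhat_step_le[OF step y] .
  have shift: "y \<otimes> t \<preceq> z \<otimes> t" if "len y < len (y \<otimes> t) \<longleftrightarrow> len z < len (z \<otimes> t)"
    using bruhat_step_mult_generator[OF step y t that] y t by (simp add: bruhat_step_le)
  have y_asc: "y \<preceq> y \<otimes> t" if "len y < len (y \<otimes> t)"
    using bruhat_le_mult_reflection[OF y generator_reflection[OF t] that] .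
  have y_desc: "y \<otimes> t \<preceq> y" if "len (y \<otimes> t) < len y"
    using bruhat_le_mult_generator_descent[OF y t that] .
  have ascent_descent: "y \<otimes> t \<preceq> z \<otimes> t \<or> z = y \<otimes> t"
    if "len y < len (y \<otimes> t)" "len (z \<otimes> t) < len z"
    using bruhat_step_descent[OF step y t that] y t by (auto simp: bruhat_step_le)
  consider (z_asc) "len z < len (z \<otimes> t)" | (z_desc) "len (z \<otimes> t) < len z"
    using len_mult_generator[OF z t] by linarith
  note z_cases = this
  show "y \<otimes> t \<preceq> w"
  proof (cases "len y < len (y \<otimes> t)")
    case True
    show ?thesis
      using z_cases
    proof cases
      case z_asc
      with True have "y \<otimes> t \<preceq> z \<otimes> t"
        by (intro shift) blast
      also note IH(1)
      finally show ?thesis .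
    next
      case z_desc
      then show ?thesis
        using ascent_descent[OF True] IH(1) zw bruhat_le_trans by blast
    qed
  next
    case False
    then have "y \<otimes> t \<preceq> y"
      using y_desc len_mult_generator[OF y t] by fastforce
    also note yz
    also note zw
    finally show ?thesis .
  qed
  show "y \<otimes> t \<preceq> w \<otimes> t" if "len (y \<otimes> t) < len y"
    using z_cases
  proof cases
    case z_asc
    have "y \<otimes> t \<preceq> y"
      using y_desc[OF that] .
    also note yz
    also note IH(3)[OF z_asc]
    finally show ?thesis .
  next
    case z_desc
    with that have "y \<otimes> t \<preceq> z \<otimes> t"
      by (intro shift) linarith
    also note IH(2)[OF z_desc]
    finally show ?thesis .
  qed
  show "y \<preceq> w \<otimes> t" if "len y < len (y \<otimes> t)"
    using z_cases
  proof cases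
    case z_asc
    with yz IH(3) show ?thesis
      by (blast intro: bruhat_le_trans)
  next
    case z_desc
    have "y \<preceq> z \<otimes> t"
    proof (cases "z = y \<otimes> t")
      case True
      then show ?thesis
        using bruhat_le_refl[OF y] y t by simp
    next
      case False
      then have "y \<otimes> t \<preceq> z \<otimes> t"
        using ascent_descent[OF that z_desc] by blast
      with y_asc[OF that] show ?thesis
        by (rule bruhat_le_trans)
    qed
    also note IH(2)[OF z_desc]
    finally show ?thesis .
  qed
qed

lemma bruhat_lifting:
  assumes le: "u \<preceq> w" and t: "t \<in> S" and w_desc: "len (w \<otimes> t) < len w"
  shows "u \<otimes> t \<preceq> w"
    and "len (u \<otimes> t) < len u \<Longrightarrow> u \<otimes> t \<preceq> w \<otimes> t"
    and "len u < len (u \<otimes> t) \<Longrightarrow> u \<preceq> w \<otimes> t"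
proof -
  have w: "w \<in> carrier G"
    using le bruhat_le_closed by blast
  have "bruhat_step\<^sup>*\<^sup>* u w" "u \<in> carrier G"
    using le by (simp_all add: bruhat_le_iff)
  then have "u \<otimes> t \<preceq> w \<and> (len (u \<otimes> t) < len u \<longrightarrow> u \<otimes> t \<preceq> w \<otimes> t)
      \<and> (len u < len (u \<otimes> t) \<longrightarrow> u \<preceq> w \<otimes> t)"
  proof (induction rule: converse_rtranclp_induct)
    case base
    then show ?case
      using bruhat_le_mult_generator_descent[OF w t w_desc] bruhat_le_refl[of "w \<otimes> t"] w t w_desc
      by auto
  next
    case (step y z)
    have "z \<in> carrier G"
      using step bruhat_step_closed by blast
    with step show ?case
      using bruhat_lifting_step[OF step.hyps(1) step.prems t, of w] by (simp add: bruhat_le_iff)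
  qed
  then show "u \<otimes> t \<preceq> w" "len (u \<otimes> t) < len u \<Longrightarrow> u \<otimes> t \<preceq> w \<otimes> t"
    "len u < len (u \<otimes> t) \<Longrightarrow> u \<preceq> w \<otimes> t"
    by blast+
qed

lemma bruhat_step_inv:
  assumes step: "bruhat_step a b" and a: "a \<in> carrier G"
  shows "bruhat_step (inv a) (inv b)"
proof -
  obtain r where r: "r \<in> reflections G S" "b = a \<otimes> r" "len a < len b"
    using step unfolding bruhat_step_def by blast
  have "inv b = inv a \<otimes> conjugate G a r"
    using r a reflection_closed by (simp add: conjugate_def m_assoc inv_mult_group)
  moreover have "len (inv a) < len (inv b)"
    using r a reflection_closed by simp
  ultimately show ?thesis
    unfolding bruhat_step_def using reflection_conjugate[OF r(1) a] by blast
qed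

lemma bruhat_le_inv: "u \<preceq> w \<Longrightarrow> inv u \<preceq> inv w"
proof -
  assume "u \<preceq> w"
  then have "bruhat_step\<^sup>*\<^sup>* u w" "u \<in> carrier G"
    by (simp_all add: bruhat_le_iff)
  then have "bruhat_step\<^sup>*\<^sup>* (inv u) (inv w)"
  proof (induction rule: converse_rtranclp_induct)
    case (step y z)
    then show ?case
      using bruhat_step_inv bruhat_step_closed by (meson converse_rtranclp_into_rtranclp)
  qed simp
  with \<open>u \<in> carrier G\<close> show ?thesis
    by (simp add: bruhat_le_iff)
qed

lemma bruhat_le_inv_iff:
  "u \<in> carrier G \<Longrightarrow> w \<in> carrier G \<Longrightarrow> inv u \<preceq> inv w \<longleftrightarrow> u \<preceq> w"
  using bruhat_le_inv[of "inv u" "inv w"] bruhat_le_inv[of u w] by auto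

lemma bruhat_lifting_left:
  assumes le: "u \<preceq> w" and s: "s \<in> S" and w_desc: "len (s \<otimes> w) < len w"
  shows "s \<otimes> u \<preceq> w"
proof -
  have c: "u \<in> carrier G" "w \<in> carrier G"
    using le bruhat_le_closed by blast+
  have "len (inv w \<otimes> s) < len (inv w)"
    using w_desc len_inv[of "s \<otimes> w"] c s by (simp add: inv_mult_group)
  then have "inv u \<otimes> s \<preceq> inv w"
    using bruhat_lifting(1)[OF bruhat_le_inv[OF le] s] by blast
  then show ?thesis
    using bruhat_le_inv_iff[of "s \<otimes> u" w] c s by (simp add: inv_mult_group)
qed

lemma double_ascent:
  assumes v: "v \<in> carrier G" and s: "s \<in> S" and t: "t \<in> S"
    and left: "len v < len (s \<otimes> v)" and right: "len v < len (v \<otimes> t)"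
  shows "s \<otimes> v = v \<otimes> t \<or> len (s \<otimes> v \<otimes> t) = len v + 2"
proof (rule disjCI)
  assume "len (s \<otimes> v \<otimes> t) \<noteq> len v + 2"
  then have desc: "len (s \<otimes> v \<otimes> t) < len (s \<otimes> v)"
    using len_generator_mult[OF v s] len_mult_generator[of "s \<otimes> v" t] left v s t by auto
  obtain vs where vs: "set vs \<subseteq> S" "length vs = len v" "wprod G vs = v"
    using reduced_word_exists[OF v] .
  have ws: "set (s # vs) \<subseteq> S" "length (s # vs) = len (wprod G (s # vs))"
    using vs s left len_generator_mult[OF v s] by auto
  then obtain i where i: "i < length (s # vs)"
      "s \<otimes> v \<otimes> t = wprod G (take i (s # vs) @ drop (Suc i) (s # vs))"
    using exchange_right[OF ws generator_reflection[OF t]] desc vs by auto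
  show "s \<otimes> v = v \<otimes> t"
  proof (cases i)
    case 0
    then have "s \<otimes> v \<otimes> t \<otimes> t = v \<otimes> t"
      using i vs by simp
    then show ?thesis
      using v s t by simp
  next
    case (Suc j)
    let ?d = "take j vs @ drop (Suc j) vs"
    have d: "set ?d \<subseteq> S" "set ?d \<subseteq> carrier G"
      using set_delete_subset[OF vs(1)] words_closed by auto
    have "s \<otimes> (s \<otimes> v \<otimes> t) = wprod G ?d"
      using i Suc s d by simp
    then have "v \<otimes> t = wprod G ?d"
      using v s t by (simp add: m_assoc)
    then have "len (v \<otimes> t) \<le> length vs - 1"
      using len_le_length[OF d(1)] i Suc by simp
    with right vs(2) show ?thesis
      by linarith
  qed
qed

lemma left_ascent_iff_right_descent:
  assumes x: "x \<in> carrier G" and s: "s \<in> S" and t: "t \<in> S"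
    and ne: "s \<otimes> x \<otimes> t \<noteq> x" and eq: "len (s \<otimes> x \<otimes> t) = len x"
  shows "len x < len (s \<otimes> x) \<longleftrightarrow> len (x \<otimes> t) < len x"
proof
  assume left: "len x < len (s \<otimes> x)"
  show "len (x \<otimes> t) < len x"
  proof (rule ccontr)
    assume "\<not> len (x \<otimes> t) < len x"
    then have "len x < len (x \<otimes> t)"
      using len_mult_generator[OF x t] by auto
    then have "s \<otimes> x = x \<otimes> t"
      using double_ascent[OF x s t left] eq by auto
    then show False
      using ne x t by simp
  qed
next
  assume right: "len (x \<otimes> t) < len x"
  show "len x < len (s \<otimes> x)"
  proof (rule ccontr)
    assume "\<not> len x < len (s \<otimes> x)"
    then have v_asc: "len (s \<otimes> x) < len (s \<otimes> (s \<otimes> x))"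
      using len_generator_mult[OF x s] x s by auto
    have "len (s \<otimes> x) < len (s \<otimes> x \<otimes> t)"
      using eq v_asc x s by simp
    then have "s \<otimes> (s \<otimes> x) = s \<otimes> x \<otimes> t \<or> len (s \<otimes> (s \<otimes> x) \<otimes> t) = len (s \<otimes> x) + 2"
      using double_ascent[of "s \<otimes> x" s t] v_asc x s t by simp
    then show False
      using ne right v_asc len_generator_mult[OF x s] x s t by auto
  qed
qed

lemma bruhat_le_conj_generators_ascent:
  assumes x: "x \<in> carrier G" and s: "s \<in> S" and t: "t \<in> S"
    and left: "len x < len (s \<otimes> x)" and right: "len (x \<otimes> t) < len x"
    and eq: "len (s \<otimes> x \<otimes> t) = len x" and le: "x' \<preceq> x"
  shows "x' \<preceq> s \<otimes> x \<otimes> t \<or> (s \<otimes> x' \<otimes> t \<preceq> s \<otimes> x \<otimes> t \<and> len (s \<otimes> x' \<otimes> t) \<le> len x')"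
proof -
  let ?w = "s \<otimes> x" and ?y = "s \<otimes> x \<otimes> t"
  have x': "x' \<in> carrier G"
    using le bruhat_le_closed by blast
  have "x' \<preceq> ?w"
    using le bruhat_le_reflection_mult[OF x generator_reflection[OF s] left] bruhat_le_trans by blast
  note lifting = bruhat_lifting[OF this t]
  have w_desc: "len (?w \<otimes> t) < len ?w"
    using eq left by simp
  show ?thesis
  proof (cases "len x' < len (x' \<otimes> t)")
    case True
    then show ?thesis
      using lifting(3)[OF w_desc] by blast
  next
    case False
    let ?v = "x' \<otimes> t"
    have v: "?v \<in> carrier G" and v_lt: "len ?v < len x'"
      using False len_mult_generator[OF x' t] x' t by auto
    have v_le: "?v \<preceq> ?y"
      using lifting(2)[OF w_desc v_lt] .
    have sv: "s \<otimes> ?v = s \<otimes> x' \<otimes> t"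
      using x' s t by (simp add: m_assoc)
    show ?thesis
    proof (cases "len (s \<otimes> ?v) < len ?v")
      case True
      then show ?thesis
        using bruhat_le_generator_mult_descent[OF v s True] v_le bruhat_le_trans sv v_lt by auto
    next
      case False
      then have "len (s \<otimes> ?v) = len x'"
        using len_generator_mult[OF v s] len_mult_generator[OF x' t] v_lt by auto
      moreover have "len (s \<otimes> ?y) < len ?y"
        using right eq x s t by (simp add: m_assoc)
      ultimately show ?thesis
        using bruhat_lifting_left[OF v_le s] sv by auto
    qed
  qed
qed

lemma bruhat_le_conj_generators:
  assumes x: "x \<in> carrier G" and s: "s \<in> S" and t: "t \<in> S"
    and eq: "len (s \<otimes> x \<otimes> t) = len x" and le: "x' \<preceq> x"
  shows "x' \<preceq> s \<otimes> x \<otimes> t \<or> (s \<otimes> x' \<otimes> t \<preceq> s \<otimes> x \<otimes> t \<and> len (s \<otimes> x' \<otimes> t) \<le> len x')"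
proof (cases "s \<otimes> x \<otimes> t = x")
  case True
  then show ?thesis
    using le by simp
next
  case ne: False
  have x': "x' \<in> carrier G"
    using le bruhat_le_closed by blast
  consider "len x < len (s \<otimes> x)" | "len (s \<otimes> x) < len x"
    using len_generator_mult[OF x s] by linarith
  then show ?thesis
  proof cases
    case 1
    then show ?thesis
      using bruhat_le_conj_generators_ascent[OF x s t 1 _ eq le]
        left_ascent_iff_right_descent[OF x s t ne eq] by blast
  next
    case 2
    \<comment> \<open>Pass to inverses, which exchanges the roles of \<open>s\<close> and \<open>t\<close>.\<close>
    have inv_eq: "inv (s \<otimes> x \<otimes> t) = t \<otimes> inv x \<otimes> s" "inv (s \<otimes> x' \<otimes> t) = t \<otimes> inv x' \<otimes> s"
      using x x' s t by (simp_all add: inv_mult_group m_assoc)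
    have "len (inv x) < len (t \<otimes> inv x)" "len (inv x \<otimes> s) < len (inv x)"
      using 2 left_ascent_iff_right_descent[OF x s t ne eq] len_mult_generator[OF x t]
        len_inv[of "x \<otimes> t"] len_inv[of "s \<otimes> x"] x s t
      by (simp_all add: inv_mult_group)
    moreover have "len (t \<otimes> inv x \<otimes> s) = len (inv x)"
      using inv_eq(1) len_inv[of "s \<otimes> x \<otimes> t"] eq x s t by simp
    ultimately have "inv x' \<preceq> t \<otimes> inv x \<otimes> s \<or>
        (t \<otimes> inv x' \<otimes> s \<preceq> t \<otimes> inv x \<otimes> s \<and> len (t \<otimes> inv x' \<otimes> s) \<le> len (inv x'))"
      using bruhat_le_conj_generators_ascent[of "inv x" t s "inv x'"] bruhat_le_inv[OF le] x t s
      by simp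
    then show ?thesis
      using inv_eq bruhat_le_inv_iff[of x' "s \<otimes> x \<otimes> t"]
        bruhat_le_inv_iff[of "s \<otimes> x' \<otimes> t" "s \<otimes> x \<otimes> t"] len_inv[of "s \<otimes> x' \<otimes> t"] x x' s t
      by simp
  qed
qed

end

theorem lemma3p3:
  fixes G :: "('a, 'b) monoid_scheme" and S :: "'a set"
  assumes "coxeter_system G S"
    and "x \<in> carrier G" and "y \<in> carrier G" and "s \<in> S" and "t \<in> S"
    and "y = s \<otimes>\<^bsub>G\<^esub> x \<otimes>\<^bsub>G\<^esub> t"
    and "cox_len G S x = cox_len G S y"
    and "x' \<in> carrier G" and "bruhat_le G S x' x"
  shows "bruhat_le G S x' y \<or>
         (bruhat_le G S (s \<otimes>\<^bsub>G\<^esub> x' \<otimes>\<^bsub>G\<^esub> t) y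
          \<and> cox_len G S (s \<otimes>\<^bsub>G\<^esub> x' \<otimes>\<^bsub>G\<^esub> t) \<le> cox_len G S x')"
proof -
  interpret coxeter G S
    using assms(1) by (auto simp: coxeter_def coxeter_axioms_def coxeter_system_def)
  show ?thesis
    using bruhat_le_conj_generators[OF assms(2,4,5) _ assms(9)] assms(6,7) by simp
qed

end
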